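(* Let $a,b>0$ and $c\in\mathbb{R}$, and let $\varphi_{a,b,c}(x)=\dfrac{c-\log(1-x)}{{}_2F_1(a,b;a+b;x)}$ on $(0,1)$. Then $\varphi_{a,b,c}$ is strictly increasing from $(0,1)$ onto $(c,B(a,b))$ if and only if $c\leq R(a,b)$, and $\varphi_{a,b,c}$ is strictly decreasing on $(0,1)$ if and only if $c\geq \frac1a+\frac1b$.
   Context: ${}_2F_1$ is the Gauss hypergeometric function. $B(a,b)=\Gamma(a)\Gamma(b)/\Gamma(a+b)$, $\psi=\Gamma'/\Gamma$, $\gamma=-\psi(1)$, $R(a,b)=-2\gamma-\psi(a)-\psi(b)$. *)

theory Defs
  imports "HOL-Analysis.Analysis"
begin

definition hyp2f1 :: "real \<Rightarrow> real \<Rightarrow> real \<Rightarrow> real \<Rightarrow> real" where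
  "hyp2f1 a b c x =
     (\<Sum>n. pochhammer a n * pochhammer b n / (pochhammer c n * fact n) * x ^ n)"

definition R_ab :: "real \<Rightarrow> real \<Rightarrow> real" where
  "R_ab a b = - 2 * euler_mascheroni - Digamma a - Digamma b"

definition phi_abc :: "real \<Rightarrow> real \<Rightarrow> real \<Rightarrow> real \<Rightarrow> real" where
  "phi_abc a b c x = (c - ln (1 - x)) / hyp2f1 a b (a + b) x"

end

theory Submission
  imports Defs "HOL-Real_Asymp.Real_Asymp"
begin

(* Write F for 2F1(a,b;a+b;x), A_n for its coefficients and B for B(a,b). The numbers
   w_n = B (n+1) A_(n+1) increase to 1 (Gamma asymptotics), and termwise
   B F(x) + ln(1-x) = B - sum_n d_n x^(n+1)  with  d_n = (1 - w_n)/(n+1) > 0.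
   As a function of b, sum_n d_n - B is monotone and obeys the recurrence of the digamma
   function, so it differs from psi by a constant; evaluating at b = 1 gives
   sum_n d_n = B - R(a,b). Hence H = B F + ln(1-x) decreases from B to R(a,b) on [0,1)
   (Ramanujan's formula) and phi = B - (H - c)/F.
   If c <= R(a,b), the positive decreasing H - c over the increasing F makes phi increase
   from c to B; if c > R(a,b), then H < c and phi > B near 1.
   Writing phi = (sum C_n x^n)/(sum A_n x^n) with C_0 = c and C_n = 1/n, the products n A_n
   increase, so C_n/A_n is decreasing exactly when c >= C_1/A_1 = 1/a + 1/b; then phi is
   strictly decreasing by the monotone ratio rule for power series. Otherwise the
   x-coefficient of (c - ln(1-x)) - c F(x) is positive, so phi > c = phi(0+) near 0. *)

section \<open>Real functions and power series\<close>

lemma mono_on_recip_recurrence_diff_const: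
  fixes f g :: "real \<Rightarrow> real"
  assumes "mono_on {0<..} f" "mono_on {0<..} g"
    and f_rec: "\<And>x. x > 0 \<Longrightarrow> f (x + 1) = f x + 1 / x"
    and g_rec: "\<And>x. x > 0 \<Longrightarrow> g (x + 1) = g x + 1 / x"
    and "x > 0" "y > 0"
  shows "f x - g x = f y - g y"
proof -
  define D where "D t = f t - g t" for t
  have D_shift: "D (t + real n) = D t" if "t > 0" for t n
  proof (induction n)
    case (Suc n)
    have "D (t + real (Suc n)) = D ((t + real n) + 1)" by (simp add: add_ac)
    also have "\<dots> = D (t + real n)"
      using f_rec[of "t + real n"] g_rec[of "t + real n"] that by (simp add: D_def)
    finally show ?case using Suc by simp
  qed simp
  have D_close: "\<bar>D t - D s\<bar> \<le> 1 / s" if "0 < s" "s \<le> t" "t \<le> s + 1" for s t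
  proof -
    have "f s \<le> f t" "f t \<le> f (s + 1)" "g s \<le> g t" "g t \<le> g (s + 1)"
      using that assms(1,2) by (auto intro: mono_onD)
    then show ?thesis
      using f_rec[OF \<open>s > 0\<close>] g_rec[OF \<open>s > 0\<close>] unfolding D_def by linarith
  qed
  have bound: "\<bar>D x - D y\<bar> \<le> 1 / (x + real n)" if "real n \<ge> y" for n
  proof -
    define m where "m = nat \<lceil>x + real n - y\<rceil>"
    have m: "x + real n \<le> y + real m" "y + real m \<le> (x + real n) + 1"
      unfolding m_def using that \<open>x > 0\<close> by linarith+
    have "\<bar>D x - D y\<bar> = \<bar>D (y + real m) - D (x + real n)\<bar>"
      using D_shift \<open>x > 0\<close> \<open>y > 0\<close> by (simp add: abs_minus_commute)
    also have "\<dots> \<le> 1 / (x + real n)"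
      using m \<open>x > 0\<close> by (intro D_close) auto
    finally show ?thesis .
  qed
  have "(\<lambda>n. 1 / (x + real n)) \<longlonglongrightarrow> 0" by real_asymp
  moreover have "eventually (\<lambda>n. \<bar>D x - D y\<bar> \<le> 1 / (x + real n)) sequentially"
    using eventually_ge_at_top[of "nat \<lceil>y\<rceil>"] by eventually_elim (intro bound; linarith)
  ultimately have "\<bar>D x - D y\<bar> \<le> 0"
    by (rule tendsto_lowerbound) simp
  then show ?thesis unfolding D_def by simp
qed

lemma eventually_at_right_imp_ex_greaterThanLessThan:
  fixes p q :: real
  assumes "p < q" "eventually P (at_right p)"
  shows "\<exists>x\<in>{p<..<q}. P x"
  using eventually_happens'[OF trivial_limit_at_right_real
          eventually_conj[OF assms(2) eventually_at_right_real[OF assms(1)]]] by blast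

lemma eventually_at_left_imp_ex_greaterThanLessThan:
  fixes p q :: real
  assumes "p < q" "eventually P (at_left q)"
  shows "\<exists>x\<in>{p<..<q}. P x"
  using eventually_happens'[OF trivial_limit_at_left_real
          eventually_conj[OF assms(2) eventually_at_left_real[OF assms(1)]]] by blast

lemma strict_mono_on_tendsto_at_right_less:
  fixes f :: "real \<Rightarrow> real"
  assumes mono: "strict_mono_on {p<..<q} f" and lim: "(f \<longlongrightarrow> L) (at_right p)"
    and x: "x \<in> {p<..<q}"
  shows "L < f x"
proof -
  define m where "m = (p + x) / 2"
  have m: "m \<in> {p<..<q}" "m < x" using x unfolding m_def by auto
  have "eventually (\<lambda>t. t \<in> {p<..<m}) (at_right p)"
    using m by (intro eventually_at_right_real) auto
  then have "eventually (\<lambda>t. f t \<le> f m) (at_right p)"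
    by eventually_elim (use m in \<open>auto intro!: less_imp_le strict_mono_onD[OF mono]\<close>)
  then have "L \<le> f m"
    using lim by (intro tendsto_upperbound) auto
  also have "f m < f x" using m x by (intro strict_mono_onD[OF mono]) auto
  finally show ?thesis .
qed

lemma strict_mono_on_tendsto_at_left_greater:
  fixes f :: "real \<Rightarrow> real"
  assumes mono: "strict_mono_on {p<..<q} f" and lim: "(f \<longlongrightarrow> U) (at_left q)"
    and x: "x \<in> {p<..<q}"
  shows "f x < U"
proof -
  define m where "m = (x + q) / 2"
  have m: "m \<in> {p<..<q}" "x < m" using x unfolding m_def by auto
  have "eventually (\<lambda>t. t \<in> {m<..<q}) (at_left q)"
    using m by (intro eventually_at_left_real) auto
  then have "eventually (\<lambda>t. f m \<le> f t) (at_left q)"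
    by eventually_elim (use m in \<open>auto intro!: less_imp_le strict_mono_onD[OF mono]\<close>)
  then have "f m \<le> U"
    using lim by (intro tendsto_lowerbound) auto
  moreover have "f x < f m" using m x by (intro strict_mono_onD[OF mono]) auto
  ultimately show ?thesis by simp
qed

lemma strict_antimono_on_tendsto_at_right_greater:
  fixes f :: "real \<Rightarrow> real"
  assumes "strict_antimono_on {p<..<q} f" "(f \<longlongrightarrow> L) (at_right p)" "x \<in> {p<..<q}"
  shows "f x < L"
proof -
  have "strict_mono_on {p<..<q} (\<lambda>t. - f t)"
    using assms(1) by (auto simp: monotone_on_def)
  from strict_mono_on_tendsto_at_right_less[OF this tendsto_minus[OF assms(2)] assms(3)]
  show ?thesis by simp
qed

lemma strict_mono_on_image_greaterThanLessThan:
  fixes f :: "real \<Rightarrow> real"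
  assumes "p < q" and mono: "strict_mono_on {p<..<q} f" and cont: "continuous_on {p<..<q} f"
    and lim_p: "(f \<longlongrightarrow> L) (at_right p)" and lim_q: "(f \<longlongrightarrow> U) (at_left q)"
  shows "f ` {p<..<q} = {L<..<U}"
proof
  show "f ` {p<..<q} \<subseteq> {L<..<U}"
    using strict_mono_on_tendsto_at_right_less[OF mono lim_p]
          strict_mono_on_tendsto_at_left_greater[OF mono lim_q] by auto
next
  show "{L<..<U} \<subseteq> f ` {p<..<q}"
  proof
    fix y assume y: "y \<in> {L<..<U}"
    then have "L < y" "y < U" by auto
    obtain x1 where x1: "f x1 < y" "x1 \<in> {p<..<q}"
      using eventually_at_right_imp_ex_greaterThanLessThan[OF \<open>p < q\<close> order_tendstoD(2)[OF lim_p \<open>L < y\<close>]]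
      by blast
    obtain x2 where x2: "y < f x2" "x2 \<in> {p<..<q}"
      using eventually_at_left_imp_ex_greaterThanLessThan[OF \<open>p < q\<close> order_tendstoD(1)[OF lim_q \<open>y < U\<close>]]
      by blast
    have "x1 < x2"
    proof (rule ccontr)
      assume "\<not> x1 < x2"
      then have "f x2 \<le> f x1"
        using strict_mono_onD[OF mono x2(2) x1(2)] by (cases "x2 = x1") auto
      with x1 x2 show False by simp
    qed
    then have "continuous_on {x1..x2} f"
      using x1 x2 by (intro continuous_on_subset[OF cont]) auto
    then obtain x where "x1 \<le> x" "x \<le> x2" "f x = y"
      using IVT'[of f x1 y x2] x1 x2 \<open>x1 < x2\<close> by auto
    with x1 x2 show "y \<in> f ` {p<..<q}" by force
  qed
qed

lemma nonneg_powser_tendsto_at_left_1: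
  fixes d :: "nat \<Rightarrow> real"
  assumes nonneg: "\<And>n. d n \<ge> 0" and "summable d"
  shows "((\<lambda>x. \<Sum>n. d n * x ^ n) \<longlongrightarrow> suminf d) (at_left 1)"
proof -
  have unit: "eventually (\<lambda>x. 0 < x \<and> x < (1::real)) (at_left 1)"
    using eventually_at_left_real[of 0 "1::real"] by simp
  have term_le: "d n * x ^ n \<le> d n" if "0 \<le> x" "x \<le> 1" for x n
    using that nonneg[of n] by (simp add: mult_left_le power_le_one)
  have summable: "summable (\<lambda>n. d n * x ^ n)" if "0 \<le> x" "x \<le> 1" for x
    using that nonneg term_le
    by (intro summable_comparison_test'[OF \<open>summable d\<close>, where N = 0]) simp
  show ?thesis
  proof (rule order_tendstoI)
    fix t assume "suminf d < t"
    show "eventually (\<lambda>x. (\<Sum>n. d n * x ^ n) < t) (at_left 1)"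
      using unit
    proof eventually_elim
      case (elim x)
      then have "(\<Sum>n. d n * x ^ n) \<le> suminf d"
        using term_le summable \<open>summable d\<close> by (intro suminf_le) auto
      with \<open>suminf d < t\<close> show ?case by simp
    qed
  next
    fix t assume "t < suminf d"
    then obtain N where N: "t < (\<Sum>n<N. d n)"
      using order_tendstoD(1)[OF summable_LIMSEQ[OF \<open>summable d\<close>]]
      by (auto simp: eventually_sequentially)
    have "((\<lambda>x. \<Sum>n<N. d n * x ^ n) \<longlongrightarrow> (\<Sum>n<N. d n * 1 ^ n)) (at_left 1)"
      by (intro tendsto_intros)
    then have "eventually (\<lambda>x. t < (\<Sum>n<N. d n * x ^ n)) (at_left 1)"
      using N by (intro order_tendstoD(1)) simp_all
    with unit show "eventually (\<lambda>x. t < (\<Sum>n. d n * x ^ n)) (at_left 1)"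
    proof eventually_elim
      case (elim x)
      have "(\<Sum>n<N. d n * x ^ n) \<le> (\<Sum>n. d n * x ^ n)"
        using elim nonneg summable by (intro sum_le_suminf) auto
      with elim show ?case by simp
    qed
  qed
qed

lemma powser_pos_at_right_0:
  fixes q :: "nat \<Rightarrow> real"
  assumes summable: "summable (\<lambda>n. q n * K ^ n)" and "K > 0" and "q 0 = 0" and "q 1 > 0"
  shows "eventually (\<lambda>x. (\<Sum>n. q n * x ^ n) > 0) (at_right 0)"
proof -
  define Q where "Q x = (\<Sum>n. q (Suc n) * x ^ n)" for x
  have "summable (\<lambda>n. q (Suc n) * K ^ Suc n)"
    using summable_Suc_iff[of "\<lambda>n. q n * K ^ n"] summable by simp
  then have "summable (\<lambda>n. K * (q (Suc n) * K ^ n))"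
    by (simp add: ac_simps)
  then have summable_Q: "summable (\<lambda>n. q (Suc n) * K ^ n)"
    using \<open>K > 0\<close> by simp
  have "isCont Q 0"
    unfolding Q_def [abs_def] using \<open>K > 0\<close> by (intro isCont_powser[OF summable_Q]) simp
  moreover have "Q 0 = q 1"
    unfolding Q_def using powser_zero[of "\<lambda>n. q (Suc n)"] by simp
  ultimately have "(Q \<longlongrightarrow> q 1) (at_right 0)"
    by (metis isCont_def tendsto_mono at_within_le_at)
  then have "eventually (\<lambda>x. Q x > 0) (at_right 0)"
    using \<open>q 1 > 0\<close> by (intro order_tendstoD(1)) auto
  with eventually_at_right_real[OF \<open>K > 0\<close>]
  show ?thesis
  proof eventually_elim
    case (elim x)
    have "(\<lambda>n. x * (q (Suc n) * x ^ n)) sums (x * Q x)"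
      unfolding Q_def using elim by (intro sums_mult summable_sums powser_inside[OF summable_Q]) auto
    then have "(\<lambda>n. q (Suc n) * x ^ Suc n) sums (x * Q x)"
      by (simp add: ac_simps)
    then have "(\<lambda>n. q n * x ^ n) sums (x * Q x)"
      using sums_Suc_iff[of "\<lambda>n. q n * x ^ n"] \<open>q 0 = 0\<close> by simp
    with elim show ?case by (simp add: sums_iff)
  qed
qed

lemma powser_neg_of_sign_change:
  fixes s :: "nat \<Rightarrow> real"
  assumes x: "0 < x" "x < y"
    and sx: "summable (\<lambda>n. s n * x ^ n)" and sy: "summable (\<lambda>n. s n * y ^ n)"
    and zero: "(\<Sum>n. s n * x ^ n) = 0"
    and nonneg: "\<And>n. n < N \<Longrightarrow> s n \<ge> 0" and neg: "\<And>n. N \<le> n \<Longrightarrow> s n < 0"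
  shows "(\<Sum>n. s n * y ^ n) < 0"
proof -
  define t where "t = y / x"
  have t: "t > 1" unfolding t_def using x by simp
  \<comment> \<open>\<open>t ^ N - t ^ n\<close> has the sign opposite to \<open>s n\<close>, so all terms of \<open>g\<close> are nonnegative\<close>
  define g where "g n = t ^ N * (s n * x ^ n) - s n * y ^ n" for n
  have g_eq: "g n = s n * x ^ n * (t ^ N - t ^ n)" for n
    unfolding g_def t_def using x by (simp add: power_divide algebra_simps)
  have g_sums: "g sums (t ^ N * 0 - (\<Sum>n. s n * y ^ n))"
    unfolding g_def [abs_def] using sx sy zero
    by (intro sums_diff sums_mult summable_sums) (auto simp: sums_iff)
  have "0 < suminf g"
  proof (rule suminf_pos2[where i = "Suc N"])
    show "summable g" using g_sums by (rule sums_summable)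
    show "0 \<le> g n" for n
    proof (cases "n < N")
      case True
      then have "t ^ n \<le> t ^ N" using t by (intro power_increasing) auto
      then show ?thesis unfolding g_eq using nonneg[OF True] x by simp
    next
      case False
      then have "t ^ N \<le> t ^ n" using t by (intro power_increasing) auto
      moreover have "s n * x ^ n \<le> 0" using neg[of n] False x by (simp add: mult_nonpos_nonneg)
      ultimately show ?thesis unfolding g_eq by (simp add: mult_nonpos_nonpos)
    qed
    have "t ^ N < t ^ Suc N" using t by simp
    moreover have "s (Suc N) * x ^ Suc N < 0" using neg[of "Suc N"] x by (simp add: mult_neg_pos)
    ultimately show "0 < g (Suc N)" unfolding g_eq by (simp add: mult_neg_neg)
  qed
  with g_sums show ?thesis by (simp add: sums_iff)
qed

lemma antimono_ratio_single_sign_change: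
  fixes A C :: "nat \<Rightarrow> real"
  assumes A_pos: "\<And>n. A n > 0"
    and ratio_antimono: "\<And>n. C (Suc n) / A (Suc n) \<le> C n / A n"
    and "\<exists>n. C n - l * A n < 0"
  obtains N where "\<And>n. n < N \<Longrightarrow> C n - l * A n \<ge> 0" "\<And>n. N \<le> n \<Longrightarrow> C n - l * A n < 0"
proof
  define N where "N = (LEAST n. C n - l * A n < 0)"
  have sign: "C n - l * A n < 0 \<longleftrightarrow> C n / A n < l" for n
    using A_pos[of n] by (simp add: divide_less_eq)
  show "C n - l * A n \<ge> 0" if "n < N" for n
    using not_less_Least[OF that[unfolded N_def]] by simp
  have "C N / A N < l"
    unfolding N_def sign [symmetric] using assms(3) by (rule LeastI_ex)
  moreover have "decseq (\<lambda>n. C n / A n)"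
    using ratio_antimono by (rule decseq_SucI)
  then have "C n / A n \<le> C N / A N" if "N \<le> n" for n
    using decseqD[OF _ that] by blast
  ultimately show "C n - l * A n < 0" if "N \<le> n" for n
    using that sign by fastforce
qed

lemma powser_ratio_strict_antimono_on:
  fixes A C :: "nat \<Rightarrow> real"
  assumes A_pos: "\<And>n. A n > 0"
    and ratio_antimono: "\<And>n. C (Suc n) / A (Suc n) \<le> C n / A n"
    and ratio_nonconst: "C m / A m \<noteq> C k / A k"
    and summable_A: "\<And>x. 0 < x \<Longrightarrow> x < r \<Longrightarrow> summable (\<lambda>n. A n * x ^ n)"
    and summable_C: "\<And>x. 0 < x \<Longrightarrow> x < r \<Longrightarrow> summable (\<lambda>n. C n * x ^ n)"
  shows "strict_antimono_on {0<..<r} (\<lambda>x. (\<Sum>n. C n * x ^ n) / (\<Sum>n. A n * x ^ n))"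
  unfolding monotone_on_def
proof (intro ballI impI)
  fix x y :: real assume x: "x \<in> {0<..<r}" and y: "y \<in> {0<..<r}" and "x < y"
  define l where "l = (\<Sum>n. C n * x ^ n) / (\<Sum>n. A n * x ^ n)"
  define s where "s n = C n - l * A n" for n
  have s_sums: "(\<lambda>n. s n * z ^ n) sums ((\<Sum>n. C n * z ^ n) - l * (\<Sum>n. A n * z ^ n))"
    if "0 < z" "z < r" for z
  proof -
    have "(\<lambda>n. C n * z ^ n - l * (A n * z ^ n)) sums ((\<Sum>n. C n * z ^ n) - l * (\<Sum>n. A n * z ^ n))"
      using that by (intro sums_diff sums_mult summable_sums summable_A summable_C)
    then show ?thesis by (simp add: s_def left_diff_distrib mult.assoc)
  qed
  have A_sum_pos: "(\<Sum>n. A n * z ^ n) > 0" if "0 < z" "z < r" for z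
    using that A_pos by (intro suminf_pos summable_A) auto
  have sx: "(\<lambda>n. s n * x ^ n) sums 0"
    using s_sums[of x] A_sum_pos[of x] x unfolding l_def by simp
  have "\<exists>n. C n - l * A n < 0"
  proof (rule ccontr)
    assume "\<not> (\<exists>n. C n - l * A n < 0)"
    then have "s n * x ^ n = 0" for n
      using suminf_eq_zero_iff[of "\<lambda>n. s n * x ^ n"] sx x by (simp add: s_def sums_iff not_less)
    then have "C n / A n = l" for n
      using A_pos[of n] x by (simp add: s_def field_simps)
    with ratio_nonconst show False by simp
  qed
  then obtain N where nonneg: "\<And>n. n < N \<Longrightarrow> s n \<ge> 0" and neg: "\<And>n. N \<le> n \<Longrightarrow> s n < 0"
    unfolding s_def by (rule antimono_ratio_single_sign_change[of A C l, OF A_pos ratio_antimono]) auto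
  have "(\<Sum>n. s n * y ^ n) < 0"
    using x \<open>x < y\<close> sums_summable[OF sx] sums_summable[OF s_sums[of y]] y
      sums_unique[OF sx, symmetric] nonneg neg
    by (intro powser_neg_of_sign_change[where N = N]) auto
  then have "(\<Sum>n. C n * y ^ n) < l * (\<Sum>n. A n * y ^ n)"
    using s_sums[of y] y by (simp add: sums_iff)
  moreover have "(\<Sum>n. A n * y ^ n) > 0"
    using A_sum_pos y by simp
  ultimately show "(\<Sum>n. C n * y ^ n) / (\<Sum>n. A n * y ^ n) < l"
    by (simp add: divide_less_eq)
qed

lemma sums_neg_ln_one_minus:
  fixes x :: real
  assumes "\<bar>x\<bar> < 1"
  shows "(\<lambda>n. x ^ n / real n) sums (- ln (1 - x))"
  \<comment> \<open>the term for \<open>n = 0\<close> is \<open>1 / 0 = 0\<close>\<close>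
  using sums_minus[OF ln_series'[of "-x"]] assms by simp

section \<open>Gamma and Beta\<close>

lemma Gamma_plus1_real: "x > 0 \<Longrightarrow> Gamma (x + 1) = x * Gamma (x :: real)"
  by (rule Gamma_plus1) (auto elim!: nonpos_Ints_cases)

lemma Gamma_shift_ratio_strict_mono:
  fixes a s t :: real
  assumes a: "a > 0" and s: "0 < s" and st: "s < t"
  shows "Gamma (s + a) / Gamma s < Gamma (t + a) / Gamma t"
proof -
  have "\<exists>z. s < z \<and> z < t \<and>
      (ln_Gamma (t + a) - ln_Gamma t) - (ln_Gamma (s + a) - ln_Gamma s)
        = (t - s) * (Digamma (z + a) - Digamma z)"
    using st s a by (intro MVT2[where f = "\<lambda>u. ln_Gamma (u + a) - ln_Gamma u"])
                    (auto intro!: derivative_eq_intros)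
  then obtain z where z: "s < z" "z < t" and mvt:
    "(ln_Gamma (t + a) - ln_Gamma t) - (ln_Gamma (s + a) - ln_Gamma s)
       = (t - s) * (Digamma (z + a) - Digamma z)"
    by blast
  have "Digamma z < Digamma (z + a)"
    using z s a by (intro Digamma_real_strict_mono) auto
  with mvt st have "ln_Gamma (s + a) - ln_Gamma s < ln_Gamma (t + a) - ln_Gamma t"
    by (metis diff_gt_0_iff_gt zero_less_mult_iff)
  then show ?thesis
    using a s st by (simp add: Gamma_real_pos_exp exp_diff [symmetric])
qed

lemma Gamma_shift_ratio_asymptotic:
  fixes z :: real
  assumes "z > 0"
  shows "(\<lambda>n. Gamma (z + real n + 1) / (fact n * real n powr z)) \<longlonglongrightarrow> 1"
proof -
  have nonpole: "z \<notin> \<int>\<^sub>\<le>\<^sub>0" using assms by (auto elim!: nonpos_Ints_cases)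
  have Gamma_z: "Gamma z \<noteq> 0" using Gamma_real_pos[OF assms] by simp
  have "(\<lambda>n. Gamma z / Gamma_series z n) \<longlonglongrightarrow> Gamma z / Gamma z"
    using Gamma_z by (intro tendsto_intros) auto
  moreover have "eventually (\<lambda>n. Gamma z / Gamma_series z n
      = Gamma (z + real n + 1) / (fact n * real n powr z)) sequentially"
    using eventually_gt_at_top[of "0::nat"]
  proof eventually_elim
    case (elim n)
    have "pochhammer z (n + 1) = Gamma (z + real n + 1) / Gamma z"
      using pochhammer_Gamma[OF nonpole, of "n + 1"] by (simp add: add_ac)
    then show ?case
      using elim Gamma_z by (simp add: Gamma_series_def powr_def field_simps)
  qed
  ultimately show ?thesis
    using Gamma_z by (simp add: Lim_transform_eventually)
qed

lemma Beta_pos_real: "a > 0 \<Longrightarrow> b > 0 \<Longrightarrow> Beta a b > (0 :: real)"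
  unfolding Beta_def by simp

lemma Beta_1_right:
  assumes "a > 0"
  shows "Beta a 1 = 1 / (a :: real)"
  unfolding Beta_def using Gamma_plus1_real[OF assms] Gamma_real_pos[OF assms] by simp

section \<open>Zero-balanced hypergeometric coefficients\<close>

definition hyp_weight :: "real \<Rightarrow> real \<Rightarrow> nat \<Rightarrow> real" where
  "hyp_weight a b n = Gamma (a + real n + 1) * Gamma (b + real n + 1)
                        / (Gamma (a + b + real n + 1) * Gamma (real n + 1))"

lemma hyp_weight_pos: "a > 0 \<Longrightarrow> b > 0 \<Longrightarrow> hyp_weight a b n > 0"
  unfolding hyp_weight_def by (simp add: add_pos_nonneg)

lemma hyp_weight_0:
  assumes "a > 0" "b > 0"
  shows "hyp_weight a b 0 = a * b / (a + b) * Beta a b"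
proof -
  have "Gamma (a + 1) = a * Gamma a" "Gamma (b + 1) = b * Gamma b"
    "Gamma (a + b + 1) = (a + b) * Gamma (a + b)"
    using assms Gamma_plus1_real by auto
  moreover have "Gamma (a + b) > 0" using assms by simp
  ultimately show ?thesis
    unfolding hyp_weight_def Beta_def using assms by (simp add: field_simps)
qed

lemma hyp_weight_Suc:
  assumes "a > 0" "b > 0"
  shows "hyp_weight a b (Suc n)
           = hyp_weight a b n * ((a + real n + 1) * (b + real n + 1)) / ((a + b + real n + 1) * (real n + 1))"
proof -
  have "Gamma (x + real (Suc n) + 1) = (x + real n + 1) * Gamma (x + real n + 1)"
    if "x \<ge> 0" for x
    using that Gamma_plus1_real[of "x + real n + 1"] by (simp add: add_ac)
  from this[of a] this[of b] this[of "a + b"] this[of 0] show ?thesis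
    unfolding hyp_weight_def using assms by (simp add: field_simps)
qed

lemma hyp_weight_Suc_minus:
  assumes "a > 0" "b > 0"
  shows "hyp_weight a b (Suc n) - hyp_weight a b n
           = a * b * hyp_weight a b n / ((real n + 1) * (a + b + real n + 1))"
proof -
  have "(a + real n + 1) * (b + real n + 1) = (a + b + real n + 1) * (real n + 1) + a * b"
    by (simp add: algebra_simps)
  moreover have "(a + b + real n + 1) * (real n + 1) > 0" using assms by simp
  ultimately show ?thesis
    unfolding hyp_weight_Suc[OF assms] by (simp add: field_simps)
qed

lemma hyp_weight_strict_mono:
  assumes "a > 0" "b > 0"
  shows "strict_mono (hyp_weight a b)"
proof (rule strict_mono_Suc_iff[THEN iffD2], intro allI)
  fix n
  have "a * b * hyp_weight a b n / ((real n + 1) * (a + b + real n + 1)) > 0"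
    using assms by (simp add: hyp_weight_pos)
  then show "hyp_weight a b n < hyp_weight a b (Suc n)"
    using hyp_weight_Suc_minus[OF assms, of n] by linarith
qed

lemma hyp_weight_LIMSEQ:
  assumes "a > 0" "b > 0"
  shows "hyp_weight a b \<longlonglongrightarrow> 1"
proof -
  define \<rho> where "\<rho> z n = Gamma (z + real n + 1) / (fact n * real n powr z)" for z n
  have "(\<lambda>n. \<rho> a n * \<rho> b n / \<rho> (a + b) n) \<longlonglongrightarrow> 1 * 1 / 1"
    unfolding \<rho>_def using assms by (intro tendsto_intros Gamma_shift_ratio_asymptotic) auto
  moreover have "eventually (\<lambda>n. \<rho> a n * \<rho> b n / \<rho> (a + b) n = hyp_weight a b n) sequentially"
    using eventually_gt_at_top[of "0::nat"]
  proof eventually_elim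
    case (elim n)
    have "Gamma (real n + 1) = fact n" using Gamma_fact[of n] by (simp add: add_ac)
    moreover have "Gamma (a + b + real n + 1) > 0" using assms by (simp add: add_pos_nonneg)
    ultimately show ?case
      using elim unfolding \<rho>_def hyp_weight_def by (simp add: powr_add field_simps)
  qed
  ultimately show ?thesis by (simp add: Lim_transform_eventually)
qed

lemma hyp_weight_less_1:
  assumes "a > 0" "b > 0"
  shows "hyp_weight a b n < 1"
proof -
  have "hyp_weight a b n < hyp_weight a b (Suc n)"
    using hyp_weight_strict_mono[OF assms] by (simp add: strict_mono_def)
  also have "\<dots> \<le> 1"
    using strict_mono_mono[OF hyp_weight_strict_mono[OF assms]] hyp_weight_LIMSEQ[OF assms]
    by (rule incseq_le)
  finally show ?thesis .
qed

lemma hyp_weight_antimono_right: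
  assumes "a > 0" "b > 0" "b \<le> b'"
  shows "hyp_weight a b' n \<le> hyp_weight a b n"
proof -
  define s t where "s = b + real n + 1" and "t = b' + real n + 1"
  have pos: "s > 0" "t > 0" "Gamma s > 0" "Gamma t > 0" "Gamma (s + a) > 0" "Gamma (t + a) > 0"
    using assms by (simp_all add: s_def t_def add_pos_nonneg)
  have "Gamma (s + a) / Gamma s \<le> Gamma (t + a) / Gamma t"
    using Gamma_shift_ratio_strict_mono[OF \<open>a > 0\<close> \<open>s > 0\<close>, of t] assms
    by (cases "b = b'") (auto simp: s_def t_def)
  then have "Gamma t / Gamma (t + a) \<le> Gamma s / Gamma (s + a)"
    using pos by (simp add: divide_simps mult.commute)
  then have "Gamma (a + real n + 1) / Gamma (real n + 1) * (Gamma t / Gamma (t + a))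
      \<le> Gamma (a + real n + 1) / Gamma (real n + 1) * (Gamma s / Gamma (s + a))"
    using assms by (intro mult_left_mono) (simp_all add: add_pos_nonneg less_imp_le)
  then show ?thesis
    unfolding hyp_weight_def s_def t_def by (simp add: add_ac mult_ac)
qed

lemma hyp_weight_plus1_right:
  assumes "a > 0" "b > 0"
  shows "hyp_weight a (b + 1) n = hyp_weight a b n * (b + real n + 1) / (a + b + real n + 1)"
proof -
  have "Gamma (b + 1 + real n + 1) = (b + real n + 1) * Gamma (b + real n + 1)"
    using assms Gamma_plus1_real[of "b + real n + 1"] by (simp add: add_ac)
  moreover have "Gamma (a + (b + 1) + real n + 1) = (a + b + real n + 1) * Gamma (a + b + real n + 1)"
    using assms Gamma_plus1_real[of "a + b + real n + 1"] by (simp add: add_ac)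
  ultimately show ?thesis
    unfolding hyp_weight_def using assms by (simp add: field_simps)
qed

lemma hyp_weight_1_right:
  assumes "a > 0"
  shows "hyp_weight a 1 n = (real n + 1) / (a + real n + 1)"
proof -
  define G where "G = Gamma (a + real n + 1) * Gamma (real n + 1)"
  have "Gamma (a + 1 + real n + 1) = (a + real n + 1) * Gamma (a + real n + 1)"
    "Gamma (1 + real n + 1) = (real n + 1) * Gamma (real n + 1)"
    using assms Gamma_plus1_real[of "a + real n + 1"] Gamma_plus1_real[of "real n + 1"]
    by (simp_all add: add_ac)
  then have "hyp_weight a 1 n = G * (real n + 1) / (G * (a + real n + 1))"
    unfolding hyp_weight_def G_def by (simp add: ac_simps)
  moreover have "G > 0"
    unfolding G_def using assms by (simp add: add_pos_nonneg)
  ultimately show ?thesis by simp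
qed

lemma hyp_weight_increments_sums:
  assumes "a > 0" "b > 0"
  shows "(\<lambda>n. hyp_weight a b (Suc n) - hyp_weight a b n) sums (1 - a * b / (a + b) * Beta a b)"
  using telescope_sums[OF hyp_weight_LIMSEQ[OF assms]] by (simp add: hyp_weight_0[OF assms])

definition hyp_defect :: "real \<Rightarrow> real \<Rightarrow> nat \<Rightarrow> real" where
  "hyp_defect a b n = (1 - hyp_weight a b n) / (real n + 1)"

lemma hyp_defect_pos: "a > 0 \<Longrightarrow> b > 0 \<Longrightarrow> hyp_defect a b n > 0"
  unfolding hyp_defect_def using hyp_weight_less_1[of a b n] by simp

lemma hyp_defect_mono_right: "a > 0 \<Longrightarrow> b > 0 \<Longrightarrow> b \<le> b' \<Longrightarrow> hyp_defect a b n \<le> hyp_defect a b' n"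
  unfolding hyp_defect_def using hyp_weight_antimono_right[of a b b' n] by (simp add: divide_right_mono)

lemma hyp_defect_plus1_right:
  assumes "a > 0" "b > 0"
  shows "hyp_defect a (b + 1) n = hyp_defect a b n + (hyp_weight a b (Suc n) - hyp_weight a b n) / b"
proof -
  have "hyp_defect a (b + 1) n - hyp_defect a b n
          = hyp_weight a b n * (1 - (b + real n + 1) / (a + b + real n + 1)) / (real n + 1)"
    unfolding hyp_defect_def hyp_weight_plus1_right[OF assms]
    by (simp add: diff_divide_distrib right_diff_distrib)
  also have "1 - (b + real n + 1) / (a + b + real n + 1) = a / (a + b + real n + 1)"
    using assms by (simp add: field_simps)
  finally have "hyp_defect a (b + 1) n - hyp_defect a b n
                  = a * hyp_weight a b n / ((real n + 1) * (a + b + real n + 1))"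
    by (simp add: ac_simps)
  then show ?thesis
    unfolding hyp_weight_Suc_minus[OF assms] using assms by simp
qed

lemma hyp_defect_1_right:
  "a > 0 \<Longrightarrow> hyp_defect a 1 n = inverse (real (Suc n)) - inverse ((a + 1) + real n)"
  unfolding hyp_defect_def by (simp add: hyp_weight_1_right field_simps)

lemma summable_hyp_defect:
  assumes "a > 0" "b > 0"
  shows "summable (hyp_defect a b)"
proof -
  have summable_nat: "summable (hyp_defect a (real (Suc m)))" for m
  proof (induction m)
    case 0
    show ?case
      using summable_Digamma[of "a + 1"] assms by (simp add: hyp_defect_1_right)
  next
    case (Suc m)
    have "summable (\<lambda>n. hyp_defect a (real (Suc m)) n
            + (hyp_weight a (real (Suc m)) (Suc n) - hyp_weight a (real (Suc m)) n) / real (Suc m))"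
      using Suc sums_summable[OF hyp_weight_increments_sums[OF assms(1)]]
      by (intro summable_add summable_divide) auto
    then show ?case
      using hyp_defect_plus1_right[OF assms(1), of "real (Suc m)"] by (simp add: add_ac)
  qed
  obtain m where "b \<le> real (Suc m)"
    by (meson le_SucI linear nat_ceiling_le_eq of_nat_le_iff real_nat_ceiling_ge)
  then show ?thesis
    using assms hyp_defect_pos hyp_defect_mono_right
    by (intro summable_comparison_test'[OF summable_nat[of m], where N = 0]) (auto simp: less_imp_le)
qed

lemma suminf_hyp_defect_plus1_right:
  assumes "a > 0" "b > 0"
  shows "suminf (hyp_defect a (b + 1)) = suminf (hyp_defect a b) + (1 - a * b / (a + b) * Beta a b) / b"
proof -
  have "hyp_defect a (b + 1) sums (suminf (hyp_defect a b) + (1 - a * b / (a + b) * Beta a b) / b)"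
    unfolding hyp_defect_plus1_right[OF assms, abs_def] using assms
    by (intro sums_add summable_sums summable_hyp_defect sums_divide hyp_weight_increments_sums)
  then show ?thesis by (rule sums_unique[symmetric])
qed

lemma suminf_hyp_defect_1_right:
  assumes "a > 0"
  shows "suminf (hyp_defect a 1) = Digamma a + 1 / a + euler_mascheroni"
proof -
  have "hyp_defect a 1 = (\<lambda>n. inverse (real (Suc n)) - inverse ((a + 1) + real n))"
    using assms by (simp add: fun_eq_iff hyp_defect_1_right)
  then show ?thesis
    using assms Digamma_def[of "a + 1"] Digamma_plus1[of a] by simp
qed

lemma suminf_hyp_defect_minus_Beta_plus1_right:
  assumes "a > 0" "b > 0"
  shows "suminf (hyp_defect a (b + 1)) - Beta a (b + 1) = suminf (hyp_defect a b) - Beta a b + 1 / b"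
proof -
  have "(a + b) * Beta a (b + 1) = b * Beta a b"
    using assms by (intro Beta_plus1_right) (auto elim!: nonpos_Ints_cases)
  then have Beta_succ: "Beta a (b + 1) = b / (a + b) * Beta a b"
    using assms by (simp add: field_simps)
  have "a / (a + b) * Beta a b + b / (a + b) * Beta a b = (a + b) / (a + b) * Beta a b"
    by (simp only: add_divide_distrib distrib_right)
  then have Beta_split: "a / (a + b) * Beta a b + b / (a + b) * Beta a b = Beta a b"
    using assms by simp
  have "(1 - a * b / (a + b) * Beta a b) / b = 1 / b - a / (a + b) * Beta a b"
    using assms by (simp add: diff_divide_distrib)
  with Beta_split show ?thesis
    unfolding suminf_hyp_defect_plus1_right[OF assms] Beta_succ by linarith
qed

lemma suminf_hyp_defect:
  assumes "a > 0" "b > 0"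
  shows "suminf (hyp_defect a b) = Beta a b - R_ab a b"
proof -
  define f where "f y = suminf (hyp_defect a y) - Beta a y" for y
  have "mono_on {0<..} f"
  proof (rule mono_onI)
    fix y y' :: real assume "y \<in> {0<..}" "y' \<in> {0<..}" "y \<le> y'"
    then have "suminf (hyp_defect a y) \<le> suminf (hyp_defect a y')" "Beta a y' \<le> Beta a y"
      using assms by (auto intro!: suminf_le hyp_defect_mono_right summable_hyp_defect Beta_real_mono)
    then show "f y \<le> f y'" unfolding f_def by linarith
  qed
  moreover have "mono_on {0<..} (Digamma :: real \<Rightarrow> real)"
    by (auto intro!: mono_onI Digamma_real_mono)
  moreover have "f (y + 1) = f y + 1 / y" if "y > 0" for y
    unfolding f_def using suminf_hyp_defect_minus_Beta_plus1_right[OF assms(1) that] .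
  moreover have "Digamma (y + 1) = Digamma y + 1 / y" if "y > 0" for y :: real
    using that by (simp add: Digamma_plus1)
  ultimately have "f b - Digamma b = f 1 - Digamma 1"
    using assms by (intro mono_on_recip_recurrence_diff_const) auto
  then show ?thesis
    unfolding f_def R_ab_def
    using suminf_hyp_defect_1_right[OF assms(1)] Beta_1_right[OF assms(1)] by simp
qed

lemma hyp_defect_sums: "a > 0 \<Longrightarrow> b > 0 \<Longrightarrow> hyp_defect a b sums (Beta a b - R_ab a b)"
  using summable_sums[OF summable_hyp_defect] suminf_hyp_defect by metis

definition hyp2f1_coeff :: "real \<Rightarrow> real \<Rightarrow> real \<Rightarrow> nat \<Rightarrow> real" where
  "hyp2f1_coeff a b c n = pochhammer a n * pochhammer b n / (pochhammer c n * fact n)"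

lemma hyp2f1_powser: "hyp2f1 a b c x = (\<Sum>n. hyp2f1_coeff a b c n * x ^ n)"
  unfolding hyp2f1_def hyp2f1_coeff_def by simp

lemma hyp2f1_coeff_pos: "a > 0 \<Longrightarrow> b > 0 \<Longrightarrow> c > 0 \<Longrightarrow> hyp2f1_coeff a b c n > 0"
  unfolding hyp2f1_coeff_def by (simp add: pochhammer_pos)

lemma hyp2f1_coeff_0 [simp]: "hyp2f1_coeff a b c 0 = 1"
  unfolding hyp2f1_coeff_def by simp

lemma hyp2f1_coeff_1: "hyp2f1_coeff a b c 1 = a * b / c"
  unfolding hyp2f1_coeff_def by simp

lemma Beta_mult_hyp2f1_coeff_Suc:
  assumes "a > 0" "b > 0"
  shows "Beta a b * (real (Suc n) * hyp2f1_coeff a b (a + b) (Suc n)) = hyp_weight a b n"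
proof -
  have pochhammer_eq: "pochhammer z (Suc n) = Gamma (z + real n + 1) / Gamma z" if "z > 0" for z :: real
  proof -
    have "z \<notin> \<int>\<^sub>\<le>\<^sub>0" using that by (auto elim!: nonpos_Ints_cases)
    then show ?thesis using pochhammer_Gamma[of z "Suc n"] by (simp add: add_ac)
  qed
  have fact_eq: "(fact (Suc n) :: real) = real (Suc n) * Gamma (real n + 1)"
    using Gamma_fact[where 'a = real, of n] by (simp add: add_ac)
  have cancel: "Ga * Gb / Gab * (p * (X / Ga * (Y / Gb) / (Z / Gab * (p * G))))
                  = X * Y / (Z * G)"
    if "Ga > 0" "Gb > 0" "Gab > 0" "p > 0" for Ga Gb Gab p X Y Z G :: real
    using that by (simp add: field_simps)
  show ?thesis
    unfolding hyp2f1_coeff_def Beta_def hyp_weight_def fact_eq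
      pochhammer_eq[OF \<open>a > 0\<close>] pochhammer_eq[OF \<open>b > 0\<close>] pochhammer_eq[OF add_pos_pos[OF assms]]
    using assms by (intro cancel) simp_all
qed

lemma hyp2f1_coeff_le:
  assumes "a > 0" "b > 0"
  shows "hyp2f1_coeff a b (a + b) n \<le> 1 + 1 / Beta a b"
proof (cases n)
  case (Suc m)
  have B: "Beta a b > 0" using assms by (rule Beta_pos_real)
  have "Beta a b * (real (Suc m) * hyp2f1_coeff a b (a + b) (Suc m)) < 1"
    using Beta_mult_hyp2f1_coeff_Suc[OF assms] hyp_weight_less_1[OF assms] by simp
  moreover have "Beta a b * hyp2f1_coeff a b (a + b) (Suc m)
                   \<le> Beta a b * (real (Suc m) * hyp2f1_coeff a b (a + b) (Suc m))"
    using hyp2f1_coeff_pos[of a b "a + b" "Suc m"] assms B by (intro mult_left_mono) simp_all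
  ultimately have "Beta a b * hyp2f1_coeff a b (a + b) (Suc m) \<le> 1"
    by linarith
  then show ?thesis
    using B Suc by (simp add: field_simps)
qed (use Beta_pos_real[OF assms] in simp)

lemma mult_hyp2f1_coeff_strict_mono:
  assumes "a > 0" "b > 0" "n \<ge> 1"
  shows "real n * hyp2f1_coeff a b (a + b) n < real (Suc n) * hyp2f1_coeff a b (a + b) (Suc n)"
proof -
  obtain m where m: "n = Suc m" using assms(3) by (cases n) auto
  have "hyp_weight a b m < hyp_weight a b (Suc m)"
    using hyp_weight_strict_mono[OF assms(1,2)] by (simp add: strict_mono_def)
  then have "Beta a b * (real n * hyp2f1_coeff a b (a + b) n)
               < Beta a b * (real (Suc n) * hyp2f1_coeff a b (a + b) (Suc n))"
    unfolding m Beta_mult_hyp2f1_coeff_Suc[OF assms(1,2)] .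
  moreover have "Beta a b > 0" by (rule Beta_pos_real[OF assms(1,2)])
  ultimately show ?thesis by simp
qed

lemma summable_hyp2f1:
  assumes "a > 0" "b > 0" "\<bar>x\<bar> < 1"
  shows "summable (\<lambda>n. hyp2f1_coeff a b (a + b) n * x ^ n)"
proof (rule summable_comparison_test'[where N = 0])
  show "summable (\<lambda>n. (1 + 1 / Beta a b) * \<bar>x\<bar> ^ n)"
    using assms by (intro summable_mult summable_geometric) auto
  show "norm (hyp2f1_coeff a b (a + b) n * x ^ n) \<le> (1 + 1 / Beta a b) * \<bar>x\<bar> ^ n" for n
    using hyp2f1_coeff_le[OF assms(1,2), of n] hyp2f1_coeff_pos[of a b "a + b" n] assms
    by (simp add: abs_mult power_abs mult_right_mono)
qed

lemma hyp2f1_sums: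
  "a > 0 \<Longrightarrow> b > 0 \<Longrightarrow> \<bar>x\<bar> < 1 \<Longrightarrow>
     (\<lambda>n. hyp2f1_coeff a b (a + b) n * x ^ n) sums hyp2f1 a b (a + b) x"
  unfolding hyp2f1_powser by (intro summable_sums summable_hyp2f1)

lemma hyp2f1_0 [simp]: "hyp2f1 a b c 0 = 1"
  unfolding hyp2f1_powser using powser_zero[of "hyp2f1_coeff a b c"] by simp

lemma hyp2f1_strict_mono:
  assumes "a > 0" "b > 0" "0 \<le> x" "x < y" "y < 1"
  shows "hyp2f1 a b (a + b) x < hyp2f1 a b (a + b) y"
proof -
  let ?A = "hyp2f1_coeff a b (a + b)"
  have diff: "(\<lambda>n. ?A n * y ^ n - ?A n * x ^ n) sums (hyp2f1 a b (a + b) y - hyp2f1 a b (a + b) x)"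
    using assms by (intro sums_diff hyp2f1_sums) auto
  have "0 < (\<Sum>n. ?A n * y ^ n - ?A n * x ^ n)"
  proof (rule suminf_pos2[where i = 1])
    show "summable (\<lambda>n. ?A n * y ^ n - ?A n * x ^ n)" using diff by (rule sums_summable)
    show "0 \<le> ?A n * y ^ n - ?A n * x ^ n" for n
      using assms hyp2f1_coeff_pos[of a b "a + b" n] by (simp add: mult_left_mono power_mono)
    show "0 < ?A 1 * y ^ 1 - ?A 1 * x ^ 1"
      using assms hyp2f1_coeff_pos[of a b "a + b" 1] by simp
  qed
  with diff show ?thesis by (simp add: sums_iff)
qed

lemma hyp2f1_ge_1: "a > 0 \<Longrightarrow> b > 0 \<Longrightarrow> 0 \<le> x \<Longrightarrow> x < 1 \<Longrightarrow> 1 \<le> hyp2f1 a b (a + b) x"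
  using hyp2f1_strict_mono[of a b 0 x] by (cases "x = 0") auto

lemma isCont_hyp2f1:
  assumes "a > 0" "b > 0" "\<bar>x\<bar> < 1"
  shows "isCont (hyp2f1 a b (a + b)) x"
proof -
  define K where "K = (1 + \<bar>x\<bar>) / 2"
  have K: "\<bar>x\<bar> < K" "\<bar>K\<bar> < 1" unfolding K_def using assms by auto
  have "isCont (\<lambda>x. \<Sum>n. hyp2f1_coeff a b (a + b) n * x ^ n) x"
    using K by (intro isCont_powser[OF summable_hyp2f1[OF assms(1,2) K(2)]]) simp
  then show ?thesis unfolding hyp2f1_powser[abs_def] .
qed

section \<open>Ramanujan's asymptotic formula\<close>

definition beta_hyp2f1_plus_ln :: "real \<Rightarrow> real \<Rightarrow> real \<Rightarrow> real" where
  "beta_hyp2f1_plus_ln a b x = Beta a b * hyp2f1 a b (a + b) x + ln (1 - x)"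

lemma beta_hyp2f1_plus_ln_sums:
  assumes "a > 0" "b > 0" "\<bar>x\<bar> < 1"
  shows "(\<lambda>n. hyp_defect a b n * x ^ Suc n) sums (Beta a b - beta_hyp2f1_plus_ln a b x)"
proof -
  let ?A = "hyp2f1_coeff a b (a + b)"
  have "(\<lambda>n. Beta a b * (?A n * x ^ n) - x ^ n / real n)
          sums (Beta a b * hyp2f1 a b (a + b) x - - ln (1 - x))"
    using assms by (intro sums_diff sums_mult hyp2f1_sums sums_neg_ln_one_minus)
  then have "(\<lambda>n. Beta a b * (?A (Suc n) * x ^ Suc n) - x ^ Suc n / real (Suc n))
               sums (beta_hyp2f1_plus_ln a b x - Beta a b)"
    unfolding beta_hyp2f1_plus_ln_def by (subst sums_Suc_iff) simp
  moreover have "Beta a b * (?A (Suc n) * x ^ Suc n) - x ^ Suc n / real (Suc n)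
                   = - (hyp_defect a b n * x ^ Suc n)" for n
  proof -
    have "Beta a b * ?A (Suc n) = hyp_weight a b n / real (Suc n)"
      using Beta_mult_hyp2f1_coeff_Suc[OF assms(1,2), of n] by (simp add: eq_divide_eq ac_simps)
    then have "Beta a b * (?A (Suc n) * x ^ Suc n) = hyp_weight a b n / real (Suc n) * x ^ Suc n"
      by (simp add: mult.assoc [symmetric])
    then show ?thesis
      unfolding hyp_defect_def by (simp add: field_simps)
  qed
  ultimately show ?thesis
    using sums_minus by fastforce
qed

lemma beta_hyp2f1_plus_ln_gt_R_ab:
  assumes "a > 0" "b > 0" "0 \<le> x" "x < 1"
  shows "beta_hyp2f1_plus_ln a b x > R_ab a b"
proof -
  have diff: "(\<lambda>n. hyp_defect a b n - hyp_defect a b n * x ^ Suc n)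
                sums ((Beta a b - R_ab a b) - (Beta a b - beta_hyp2f1_plus_ln a b x))"
    using assms by (intro sums_diff beta_hyp2f1_plus_ln_sums hyp_defect_sums) auto
  have "0 < (\<Sum>n. hyp_defect a b n - hyp_defect a b n * x ^ Suc n)"
  proof (rule suminf_pos2[where i = 0])
    show "summable (\<lambda>n. hyp_defect a b n - hyp_defect a b n * x ^ Suc n)"
      using diff by (rule sums_summable)
    show "0 \<le> hyp_defect a b n - hyp_defect a b n * x ^ Suc n" for n
      using assms hyp_defect_pos[OF assms(1,2), of n]
      by (simp add: mult_left_le power_le_one del: power_Suc)
    show "0 < hyp_defect a b 0 - hyp_defect a b 0 * x ^ Suc 0"
      using assms hyp_defect_pos[OF assms(1,2), of 0] by simp
  qed
  with diff show ?thesis by (simp add: sums_iff)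
qed

lemma beta_hyp2f1_plus_ln_antimono:
  assumes "a > 0" "b > 0" "0 \<le> x" "x \<le> y" "y < 1"
  shows "beta_hyp2f1_plus_ln a b y \<le> beta_hyp2f1_plus_ln a b x"
proof -
  have diff: "(\<lambda>n. hyp_defect a b n * y ^ Suc n - hyp_defect a b n * x ^ Suc n)
                sums ((Beta a b - beta_hyp2f1_plus_ln a b y) - (Beta a b - beta_hyp2f1_plus_ln a b x))"
    using assms by (intro sums_diff beta_hyp2f1_plus_ln_sums) auto
  have "0 \<le> (\<Sum>n. hyp_defect a b n * y ^ Suc n - hyp_defect a b n * x ^ Suc n)"
    using assms hyp_defect_pos[OF assms(1,2)] sums_summable[OF diff]
    by (intro suminf_nonneg) (auto intro!: mult_left_mono power_mono less_imp_le simp del: power_Suc)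
  with diff show ?thesis by (simp add: sums_iff)
qed

lemma beta_hyp2f1_plus_ln_tendsto:
  assumes "a > 0" "b > 0"
  shows "(beta_hyp2f1_plus_ln a b \<longlongrightarrow> R_ab a b) (at_left 1)"
proof -
  define g where "g x = (\<Sum>n. hyp_defect a b n * x ^ n)" for x :: real
  have "((\<lambda>x. Beta a b - x * g x) \<longlongrightarrow> Beta a b - 1 * suminf (hyp_defect a b)) (at_left 1)"
    unfolding g_def using hyp_defect_pos[OF assms] summable_hyp_defect[OF assms]
    by (intro tendsto_intros nonneg_powser_tendsto_at_left_1) (auto intro: less_imp_le)
  moreover have "eventually (\<lambda>x. Beta a b - x * g x = beta_hyp2f1_plus_ln a b x) (at_left 1)"
    using eventually_at_left_real[OF zero_less_one]
  proof eventually_elim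
    case (elim x)
    have "(\<lambda>n. x * (hyp_defect a b n * x ^ n)) sums (Beta a b - beta_hyp2f1_plus_ln a b x)"
      using beta_hyp2f1_plus_ln_sums[OF assms, of x] elim by (simp add: ac_simps)
    moreover from this have "summable (\<lambda>n. hyp_defect a b n * x ^ n)"
      using elim sums_summable by fastforce
    ultimately show ?case
      unfolding g_def using suminf_mult sums_unique by fastforce
  qed
  ultimately show ?thesis
    using suminf_hyp_defect[OF assms] by (simp add: Lim_transform_eventually)
qed

lemma hyp2f1_tendsto_at_top:
  assumes "a > 0" "b > 0"
  shows "filterlim (hyp2f1 a b (a + b)) at_top (at_left 1)"
proof -
  have B: "Beta a b > 0" using assms by (rule Beta_pos_real)
  have "filterlim (\<lambda>x. - ln (1 - x) :: real) at_top (at_left 1)" by real_asymp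
  then have "filterlim (\<lambda>x. beta_hyp2f1_plus_ln a b x + - ln (1 - x)) at_top (at_left 1)"
    by (rule filterlim_tendsto_add_at_top[OF beta_hyp2f1_plus_ln_tendsto[OF assms]])
  then have "filterlim (\<lambda>x. 1 / Beta a b * (beta_hyp2f1_plus_ln a b x + - ln (1 - x))) at_top (at_left 1)"
    using B by (intro filterlim_tendsto_pos_mult_at_top[OF tendsto_const]) simp_all
  moreover have "1 / Beta a b * (beta_hyp2f1_plus_ln a b x + - ln (1 - x)) = hyp2f1 a b (a + b) x" for x
    unfolding beta_hyp2f1_plus_ln_def using B by (simp add: field_simps)
  ultimately show ?thesis by simp
qed

section \<open>Monotonicity of phi\<close>

lemma phi_abc_eq:
  assumes "a > 0" "b > 0" "0 \<le> x" "x < 1"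
  shows "phi_abc a b c x = Beta a b - (beta_hyp2f1_plus_ln a b x - c) / hyp2f1 a b (a + b) x"
  using hyp2f1_ge_1[OF assms] unfolding phi_abc_def beta_hyp2f1_plus_ln_def
  by (simp add: field_simps)

lemma isCont_phi_abc:
  assumes "a > 0" "b > 0" "0 \<le> x" "x < 1"
  shows "isCont (phi_abc a b c) x"
  unfolding phi_abc_def [abs_def] using assms hyp2f1_ge_1[OF assms]
  by (intro continuous_intros isCont_hyp2f1) auto

lemma phi_abc_tendsto_0:
  assumes "a > 0" "b > 0"
  shows "(phi_abc a b c \<longlongrightarrow> c) (at_right 0)"
proof -
  have "(phi_abc a b c \<longlongrightarrow> phi_abc a b c 0) (at 0)"
    using isCont_phi_abc[OF assms, of 0] by (simp add: isCont_def)
  then show ?thesis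
    unfolding phi_abc_def by (simp add: tendsto_mono[OF at_within_le_at])
qed

lemma phi_abc_tendsto_1:
  assumes "a > 0" "b > 0"
  shows "(phi_abc a b c \<longlongrightarrow> Beta a b) (at_left 1)"
proof -
  have "((\<lambda>x. beta_hyp2f1_plus_ln a b x - c) \<longlongrightarrow> R_ab a b - c) (at_left 1)"
    by (intro tendsto_intros beta_hyp2f1_plus_ln_tendsto assms)
  then have "((\<lambda>x. (beta_hyp2f1_plus_ln a b x - c) / hyp2f1 a b (a + b) x) \<longlongrightarrow> 0) (at_left 1)"
    using filterlim_at_top_imp_at_infinity[OF hyp2f1_tendsto_at_top[OF assms]]
    by (rule tendsto_divide_0)
  then have "((\<lambda>x. Beta a b - (beta_hyp2f1_plus_ln a b x - c) / hyp2f1 a b (a + b) x)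
               \<longlongrightarrow> Beta a b - 0) (at_left 1)"
    by (intro tendsto_intros)
  moreover have "eventually (\<lambda>x. Beta a b - (beta_hyp2f1_plus_ln a b x - c) / hyp2f1 a b (a + b) x
                                   = phi_abc a b c x) (at_left 1)"
    using eventually_at_left_real[OF zero_less_one] by eventually_elim (simp add: phi_abc_eq assms)
  ultimately show ?thesis by (simp add: Lim_transform_eventually)
qed

lemma phi_abc_strict_mono_on:
  assumes "a > 0" "b > 0" "c \<le> R_ab a b"
  shows "strict_mono_on {0<..<1} (phi_abc a b c)"
proof (rule strict_mono_onI)
  fix x y :: real assume x: "x \<in> {0<..<1}" and y: "y \<in> {0<..<1}" and "x < y"
  let ?F = "hyp2f1 a b (a + b)" and ?H = "beta_hyp2f1_plus_ln a b"
  have "(?H y - c) / ?F y < (?H x - c) / ?F x"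
  proof (rule frac_less2)
    show "0 < ?H y - c" using beta_hyp2f1_plus_ln_gt_R_ab[OF assms(1,2), of y] y assms(3) by simp
    show "?H y - c \<le> ?H x - c"
      using beta_hyp2f1_plus_ln_antimono[OF assms(1,2), of x y] x y \<open>x < y\<close> by simp
    show "0 < ?F x" using hyp2f1_ge_1[OF assms(1,2), of x] x by simp
    show "?F x < ?F y" using hyp2f1_strict_mono[OF assms(1,2), of x y] y \<open>x < y\<close> x by simp
  qed
  then show "phi_abc a b c x < phi_abc a b c y"
    using x y by (simp add: phi_abc_eq assms)
qed

lemma le_R_ab_of_phi_abc_image:
  assumes "a > 0" "b > 0" and image: "phi_abc a b c ` {0<..<1} = {c<..<Beta a b}"
  shows "c \<le> R_ab a b"
proof (rule ccontr)
  assume "\<not> c \<le> R_ab a b"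
  then have "eventually (\<lambda>x. beta_hyp2f1_plus_ln a b x < c) (at_left 1)"
    by (intro order_tendstoD(2)[OF beta_hyp2f1_plus_ln_tendsto[OF assms(1,2)]]) simp
  then obtain x where x: "x \<in> {0<..<1}" "beta_hyp2f1_plus_ln a b x < c"
    using eventually_at_left_imp_ex_greaterThanLessThan[OF zero_less_one] by blast
  have "(beta_hyp2f1_plus_ln a b x - c) / hyp2f1 a b (a + b) x < 0"
    using x hyp2f1_ge_1[OF assms(1,2), of x] by (intro divide_neg_pos) auto
  then have "Beta a b < phi_abc a b c x"
    using x by (simp add: phi_abc_eq assms(1,2))
  moreover have "phi_abc a b c x < Beta a b" using image x by auto
  ultimately show False by simp
qed

definition log_coeff :: "real \<Rightarrow> nat \<Rightarrow> real" where
  "log_coeff c n = (if n = 0 then c else 1 / real n)"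

lemma log_coeff_0 [simp]: "log_coeff c 0 = c"
  and log_coeff_nonzero [simp]: "n \<noteq> 0 \<Longrightarrow> log_coeff c n = 1 / real n"
  unfolding log_coeff_def by simp_all

lemma log_coeff_sums:
  assumes "\<bar>x\<bar> < 1"
  shows "(\<lambda>n. log_coeff c n * x ^ n) sums (c - ln (1 - x))"
proof -
  have "(\<lambda>n. (if n = 0 then c else 0) + x ^ n / real n) sums (c + - ln (1 - x))"
    using sums_single[of 0 "\<lambda>_. c"] sums_neg_ln_one_minus[OF assms] by (intro sums_add) simp_all
  moreover have "(if n = 0 then c else 0) + x ^ n / real n = log_coeff c n * x ^ n" for n
    unfolding log_coeff_def by simp
  ultimately show ?thesis by simp
qed

lemma phi_abc_powser_ratio:
  assumes "a > 0" "b > 0" "\<bar>x\<bar> < 1"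
  shows "phi_abc a b c x = (\<Sum>n. log_coeff c n * x ^ n) / (\<Sum>n. hyp2f1_coeff a b (a + b) n * x ^ n)"
  unfolding phi_abc_def hyp2f1_powser[symmetric] using sums_unique[OF log_coeff_sums[OF assms(3)]]
  by simp

lemma phi_abc_strict_antimono_on:
  assumes "a > 0" "b > 0" "1 / a + 1 / b \<le> c"
  shows "strict_antimono_on {0<..<1} (phi_abc a b c)"
proof -
  let ?A = "hyp2f1_coeff a b (a + b)"
  have A_pos: "?A n > 0" for n using assms by (simp add: hyp2f1_coeff_pos)
  have A_1: "1 / ?A 1 = 1 / a + 1 / b"
    unfolding hyp2f1_coeff_1 using assms by (simp add: field_simps)
  have ratio_Suc: "log_coeff c n / ?A n = 1 / (real n * ?A n)" if "n \<ge> 1" for n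
    using that by simp
  have "strict_antimono_on {0<..<1} (\<lambda>x. (\<Sum>n. log_coeff c n * x ^ n) / (\<Sum>n. ?A n * x ^ n))"
  proof (rule powser_ratio_strict_antimono_on[where m = 1 and k = 2])
    show "log_coeff c (Suc n) / ?A (Suc n) \<le> log_coeff c n / ?A n" for n
    proof (cases "n = 0")
      case True
      then show ?thesis using A_1 assms(3) by simp
    next
      case False
      then have "real n * ?A n < real (Suc n) * ?A (Suc n)"
        using assms by (intro mult_hyp2f1_coeff_strict_mono) auto
      moreover have "0 < real n * ?A n" using False A_pos[of n] by simp
      ultimately have "1 / (real (Suc n) * ?A (Suc n)) \<le> 1 / (real n * ?A n)"
        by (intro divide_left_mono) auto
      then show ?thesis
        using ratio_Suc[of n] ratio_Suc[of "Suc n"] False by simp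
    qed
    have "1 * ?A 1 < 2 * ?A 2"
      using mult_hyp2f1_coeff_strict_mono[OF assms(1,2), of 1] by (simp add: numeral_2_eq_2)
    then show "log_coeff c 1 / ?A 1 \<noteq> log_coeff c 2 / ?A 2"
      using A_pos[of 1] A_pos[of 2] by (auto simp: divide_simps)
    show "summable (\<lambda>n. log_coeff c n * x ^ n)" if "0 < x" "x < 1" for x
      using log_coeff_sums[of x c] that by (simp add: sums_summable)
    show "?A n > 0" for n by (rule A_pos)
    show "summable (\<lambda>n. ?A n * x ^ n)" if "0 < x" "x < 1" for x
      using that assms by (intro summable_hyp2f1) auto
  qed
  then show ?thesis
    by (simp add: monotone_on_def phi_abc_powser_ratio assms)
qed

lemma ge_recip_sum_of_phi_abc_strict_antimono_on:
  assumes "a > 0" "b > 0" and anti: "strict_antimono_on {0<..<1} (phi_abc a b c)"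
  shows "1 / a + 1 / b \<le> c"
proof (rule ccontr)
  assume "\<not> 1 / a + 1 / b \<le> c"
  then have "c * hyp2f1_coeff a b (a + b) 1 < 1"
    unfolding hyp2f1_coeff_1 using assms by (simp add: field_simps)
  define s where "s n = log_coeff c n - c * hyp2f1_coeff a b (a + b) n" for n
  have s_sums: "(\<lambda>n. s n * x ^ n) sums ((c - ln (1 - x)) - c * hyp2f1 a b (a + b) x)"
    if "\<bar>x\<bar> < 1" for x
    unfolding s_def left_diff_distrib mult.assoc
    using that assms by (intro sums_diff sums_mult log_coeff_sums hyp2f1_sums)
  have "eventually (\<lambda>x. (\<Sum>n. s n * x ^ n) > 0) (at_right 0)"
  proof (rule powser_pos_at_right_0)
    show "summable (\<lambda>n. s n * (1 / 2) ^ n)" using s_sums[of "1 / 2"] by (simp add: sums_summable)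
    show "s 1 > 0" unfolding s_def using \<open>c * hyp2f1_coeff a b (a + b) 1 < 1\<close> by simp
  qed (simp_all add: s_def)
  then obtain x where x: "x \<in> {0<..<1}" "(\<Sum>n. s n * x ^ n) > 0"
    using eventually_at_right_imp_ex_greaterThanLessThan[OF zero_less_one] by blast
  then have "c * hyp2f1 a b (a + b) x < c - ln (1 - x)"
    using s_sums[of x] by (simp add: sums_iff)
  then have "c < phi_abc a b c x"
    unfolding phi_abc_def using hyp2f1_ge_1[OF assms(1,2), of x] x by (simp add: pos_less_divide_eq)
  moreover have "phi_abc a b c x < c"
    using strict_antimono_on_tendsto_at_right_greater[OF anti phi_abc_tendsto_0[OF assms(1,2)] x(1)]
    by simp
  ultimately show False by simp
qed

theorem lemma7:
  fixes a b c :: real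
  assumes "a > 0" and "b > 0"
  shows "((strict_mono_on {0<..<1} (phi_abc a b c) \<and>
            phi_abc a b c ` {0<..<1} = {c<..<Beta a b}) \<longleftrightarrow> c \<le> R_ab a b)
       \<and> (strict_antimono_on {0<..<1} (phi_abc a b c) \<longleftrightarrow> c \<ge> 1 / a + 1 / b)"
proof (rule conjI[OF iffI iffI])
  assume "strict_mono_on {0<..<1} (phi_abc a b c) \<and> phi_abc a b c ` {0<..<1} = {c<..<Beta a b}"
  then show "c \<le> R_ab a b"
    using le_R_ab_of_phi_abc_image[OF assms] by blast
next
  assume "c \<le> R_ab a b"
  then have mono: "strict_mono_on {0<..<1} (phi_abc a b c)"
    by (rule phi_abc_strict_mono_on[OF assms])
  moreover have "continuous_on {0<..<1} (phi_abc a b c)"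
    using assms by (intro continuous_at_imp_continuous_on ballI isCont_phi_abc) auto
  ultimately show "strict_mono_on {0<..<1} (phi_abc a b c) \<and>
                     phi_abc a b c ` {0<..<1} = {c<..<Beta a b}"
    using strict_mono_on_image_greaterThanLessThan[OF zero_less_one mono _
            phi_abc_tendsto_0[OF assms] phi_abc_tendsto_1[OF assms]] by blast
next
  assume "strict_antimono_on {0<..<1} (phi_abc a b c)"
  then show "1 / a + 1 / b \<le> c"
    by (rule ge_recip_sum_of_phi_abc_strict_antimono_on[OF assms])
next
  assume "1 / a + 1 / b \<le> c"
  then show "strict_antimono_on {0<..<1} (phi_abc a b c)"
    by (rule phi_abc_strict_antimono_on[OF assms])
qed

end
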